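(* For any $\beta\in[0,\infty)$ there exists a weight sequence $\boldsymbol{M}^\beta$ such that: (i) $\boldsymbol{M}^\beta$ satisfies $\operatorname{(sm)}$; (ii) $\boldsymbol{M}^\beta$ does not satisfy $\operatorname{(dc)}$ (and hence not $\operatorname{(mg)}$ either); (iii) $\gamma(\boldsymbol{M}^\beta)=\beta$.
   Context: A weight sequence is a sequence $\boldsymbol{M}=(M_p)_{p\in\mathbb{N}_0}$ of positive reals with $M_0=1$, $M_p^2\le M_{p-1}M_{p+1}$ ($p\ge1$) and $m_p=M_{p+1}/M_p\to\infty$. $\operatorname{(sm)}$: $\log(m_{p+1}/m_p)\le C_0H^{p+1}$ for all $p$, some $C_0>0$, $H>1$. $\operatorname{(dc)}$: $M_{p+1}\le C_0H^{p+1}M_p$ for all $p$, some $C_0>0$, $H>1$. $\operatorname{(mg)}$: $M_{p+q}\le C_0H^{p+q}M_pM_q$ for all $p,q$, some $C_0>0,H>1$. Almost increasing: $c_p\le ac_q$ for $q\ge p$, some $a>0$. $\gamma(\boldsymbol{M})=\sup\{\mu>0:(m_p/(p+1)^\mu)_p\text{ almost increasing}\}\in[0,\infty]$. *)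

theory Defs
  imports "HOL-Analysis.Analysis"
begin

definition quot_seq :: "(nat \<Rightarrow> real) \<Rightarrow> nat \<Rightarrow> real" where
  "quot_seq M p = M (Suc p) / M p"

definition weight_sequence :: "(nat \<Rightarrow> real) \<Rightarrow> bool" where
  "weight_sequence M \<longleftrightarrow> (\<forall>p. M p > 0) \<and> M 0 = 1 \<and>
     (\<forall>p\<ge>1. (M p)\<^sup>2 \<le> M (p - 1) * M (p + 1)) \<and>
     filterlim (quot_seq M) at_top sequentially"

definition cond_sm :: "(nat \<Rightarrow> real) \<Rightarrow> bool" where
  "cond_sm M \<longleftrightarrow> (\<exists>C0>0. \<exists>H>1. \<forall>p.
     ln (quot_seq M (p + 1) / quot_seq M p) \<le> C0 * H ^ (p + 1))"

definition cond_dc :: "(nat \<Rightarrow> real) \<Rightarrow> bool" where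
  "cond_dc M \<longleftrightarrow> (\<exists>C0>0. \<exists>H>1. \<forall>p. M (p + 1) \<le> C0 * H ^ (p + 1) * M p)"

definition cond_mg :: "(nat \<Rightarrow> real) \<Rightarrow> bool" where
  "cond_mg M \<longleftrightarrow> (\<exists>C0>0. \<exists>H>1. \<forall>p q. M (p + q) \<le> C0 * H ^ (p + q) * M p * M q)"

definition almost_increasing :: "(nat \<Rightarrow> real) \<Rightarrow> bool" where
  "almost_increasing c \<longleftrightarrow> (\<exists>a>0. \<forall>p q. p \<le> q \<longrightarrow> c p \<le> a * c q)"

text \<open>gamma(M) as an extended real; the supremum of the empty set is taken to be 0,
  so that gamma(M) lies in [0, infinity] as in the paper.\<close>
definition gamma_index :: "(nat \<Rightarrow> real) \<Rightarrow> ereal" where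
  "gamma_index M = Sup (insert 0 (ereal ` {\<mu>. \<mu> > 0 \<and>
      almost_increasing (\<lambda>p. quot_seq M p / (real (p + 1)) powr \<mu>)}))"

end

theory Submission
  imports Defs
begin

text \<open>Take \<open>m\<^sub>p = (p + 1)\<^sup>\<beta> exp (h(p)\<^sup>2)\<close>, where \<open>h\<close> is a step function that stays equal
  to \<open>q\<close> on the plateau \<open>[q, q\<^sup>2)\<close> and then jumps to \<open>q\<^sup>2\<close>. Since \<open>h(p) \<le> p + 2\<close>, the
  logarithmic ratios \<open>log(m\<^sub>p\<^sub>+\<^sub>1/m\<^sub>p)\<close> grow only polynomially, which gives (sm). At the
  jump points \<open>p = q\<close> we have \<open>m\<^sub>q \<ge> exp(q\<^sup>2)\<close>, which no geometric bound \<open>C H\<^sup>p\<close> can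
  dominate, so (dc) fails. Dividing by \<open>(p + 1)\<^sup>\<mu>\<close> replaces \<beta> by \<open>\<beta> - \<mu>\<close>: for \<open>\<mu> \<le> \<beta>\<close> the
  sequence stays increasing, while for \<open>\<mu> > \<beta>\<close> the decay \<open>(q + 1)\<^sup>\<beta>\<^sup>-\<^sup>\<mu>\<close> versus
  \<open>(q\<^sup>2)\<^sup>\<beta>\<^sup>-\<^sup>\<mu>\<close> across an ever longer plateau rules out almost monotonicity.
  Hence \<open>\<gamma>(M) = \<beta>\<close>.\<close>

(* tower_floor p is the largest of 2, 4, 16, 256, ... (each the square of the previous)
   that does not exceed max 2 p. *)
primrec tower_floor :: "nat \<Rightarrow> nat" where
  "tower_floor 0 = 2"
| "tower_floor (Suc p) =
     (if Suc p = tower_floor p * tower_floor p then Suc p else tower_floor p)"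

lemma tower_floor_bounds:
  "2 \<le> tower_floor p \<and> tower_floor p \<le> p + 2 \<and> p < tower_floor p * tower_floor p"
proof (induction p)
  case 0
  then show ?case by simp
next
  case (Suc p)
  show ?case
  proof (cases "Suc p = tower_floor p * tower_floor p")
    case True
    have jump: "tower_floor (Suc p) = Suc p"
      unfolding tower_floor.simps(2) by (rule if_P[OF True])
    have "2 * 2 \<le> tower_floor p * tower_floor p"
      using Suc.IH by (intro mult_le_mono) auto
    then have "2 \<le> Suc p" using True by simp
    then have "Suc p * 1 < Suc p * Suc p" by (intro mult_less_mono2) auto
    then show ?thesis using jump \<open>2 \<le> Suc p\<close> by simp
  next
    case False
    then show ?thesis using Suc.IH by auto
  qed
qed

lemma mono_tower_floor: "mono tower_floor"
  by (rule incseq_SucI) (use tower_floor_bounds in auto)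

lemma tower_floor_const:
  assumes "p \<le> j" "j < tower_floor p * tower_floor p"
  shows "tower_floor j = tower_floor p"
  using assms
proof (induction j)
  case 0
  then show ?case by simp
next
  case (Suc j)
  then show ?case by (cases "p = Suc j") auto
qed

lemma tower_floor_square:
  "tower_floor (tower_floor p * tower_floor p) = tower_floor p * tower_floor p"
proof -
  obtain j where j: "tower_floor p * tower_floor p = Suc j" "p \<le> j"
    using tower_floor_bounds[of p] by (metis less_imp_Suc_add le_add1)
  then have "tower_floor j = tower_floor p"
    by (intro tower_floor_const) auto
  then show ?thesis using j by simp
qed

lemma tower_floor_fixed_points: "\<exists>q\<ge>N. tower_floor q = q"
  using tower_floor_square[of N] tower_floor_bounds[of N] by (intro exI conjI) auto

definition seq_of_quotients :: "(nat \<Rightarrow> real) \<Rightarrow> nat \<Rightarrow> real" where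
  "seq_of_quotients m p = (\<Prod>i<p. m i)"

lemma seq_of_quotients_pos: "(\<And>i. m i > 0) \<Longrightarrow> seq_of_quotients m p > 0"
  unfolding seq_of_quotients_def by (simp add: prod_pos)

lemma quot_seq_of_quotients:
  assumes "\<And>i. m i > 0"
  shows "quot_seq (seq_of_quotients m) = m"
proof
  fix p
  have "seq_of_quotients m p \<noteq> 0"
    using seq_of_quotients_pos[of m p] assms by simp
  then show "quot_seq (seq_of_quotients m) p = m p"
    by (simp add: quot_seq_def seq_of_quotients_def)
qed

lemma weight_sequence_of_quotients:
  assumes pos: "\<And>i. m i > 0" and "mono m" and "filterlim m at_top sequentially"
  shows "weight_sequence (seq_of_quotients m)"
  unfolding weight_sequence_def quot_seq_of_quotients[OF pos]
proof (intro conjI allI impI)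
  show "seq_of_quotients m p > 0" for p
    using pos by (rule seq_of_quotients_pos)
  show "seq_of_quotients m 0 = 1"
    by (simp add: seq_of_quotients_def)
  show "(seq_of_quotients m p)\<^sup>2 \<le> seq_of_quotients m (p - 1) * seq_of_quotients m (p + 1)"
    if "p \<ge> 1" for p
  proof -
    obtain q where q: "p = Suc q" using \<open>p \<ge> 1\<close> by (cases p) auto
    have "m q \<le> m p" using \<open>mono m\<close> q by (simp add: monoD)
    then show ?thesis
      using q seq_of_quotients_pos[of m q, OF pos] pos[of q]
      by (simp add: seq_of_quotients_def power2_eq_square)
  qed
  show "filterlim m at_top sequentially" by fact
qed

lemma cond_dc_iff_quot_seq:
  assumes "\<And>p. M p > 0"
  shows "cond_dc M \<longleftrightarrow> (\<exists>C0>0. \<exists>H>1. \<forall>p. quot_seq M p \<le> C0 * H ^ (p + 1))"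
  unfolding cond_dc_def quot_seq_def using assms by (simp add: pos_divide_le_eq)

lemma cond_mg_imp_cond_dc:
  assumes "M 1 > 0" and "cond_mg M"
  shows "cond_dc M"
proof -
  obtain C H where "C > 0" "H > 1" and mg: "\<And>p q. M (p + q) \<le> C * H ^ (p + q) * M p * M q"
    using \<open>cond_mg M\<close> unfolding cond_mg_def by blast
  have "M (p + 1) \<le> (C * M 1) * H ^ (p + 1) * M p" for p
    using mg[of p 1] by (simp add: algebra_simps)
  moreover have "C * M 1 > 0" using \<open>C > 0\<close> assms(1) by simp
  ultimately show ?thesis unfolding cond_dc_def using \<open>H > 1\<close> by blast
qed

lemma eventually_geometric_lt_exp_square:
  fixes C H :: real
  assumes "C > 0" "H > 1"
  shows "eventually (\<lambda>p. C * H ^ (p + 1) < exp (real p ^ 2)) sequentially"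
proof -
  define L where "L = \<bar>ln C\<bar> + 2 * ln H + 1"
  have "ln H > 0" using \<open>H > 1\<close> by simp
  have "eventually (\<lambda>p. real p \<ge> L) sequentially"
    using filterlim_real_sequentially unfolding filterlim_at_top by (rule spec)
  then show ?thesis
  proof (rule eventually_mono)
    fix p
    assume "real p \<ge> L"
    define x where "x = real p"
    have "x \<ge> 1" using \<open>real p \<ge> L\<close> \<open>ln H > 0\<close> unfolding x_def L_def by simp
    have "ln C + (x + 1) * ln H < x * \<bar>ln C\<bar> + 2 * x * ln H + x"
    proof -
      have "\<bar>ln C\<bar> \<le> x * \<bar>ln C\<bar>" using \<open>x \<ge> 1\<close> by (simp add: mult_le_cancel_right1)
      moreover have "(x + 1) * ln H \<le> 2 * x * ln H"
        using \<open>x \<ge> 1\<close> \<open>ln H > 0\<close> by (intro mult_right_mono) auto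
      ultimately show ?thesis using \<open>x \<ge> 1\<close> by linarith
    qed
    also have "\<dots> = x * L" by (simp add: L_def algebra_simps)
    also have "\<dots> \<le> x * x"
      using \<open>real p \<ge> L\<close> \<open>x \<ge> 1\<close> unfolding x_def by (intro mult_left_mono) auto
    finally have "ln C + real (p + 1) * ln H < real p ^ 2"
      by (simp add: x_def power2_eq_square algebra_simps)
    have "C * H ^ (p + 1) = exp (ln C + real (p + 1) * ln H)"
      using assms by (simp only: exp_add exp_of_nat_mult exp_ln)
    also have "\<dots> < exp (real p ^ 2)"
      using \<open>ln C + real (p + 1) * ln H < real p ^ 2\<close> by (rule exp_less_mono)
    finally show "C * H ^ (p + 1) < exp (real p ^ 2)" .
  qed
qed

lemma eventually_powr_succ_lt_powr_square:
  fixes a e :: real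
  assumes "a > 0" "e > 0"
  shows "eventually (\<lambda>q. a * (real q + 1) powr e < (real q * real q) powr e) sequentially"
proof -
  define K where "K = (a + 1) powr (1 / e)"
  have "K > 0" using \<open>a > 0\<close> by (simp add: K_def)
  have "eventually (\<lambda>q. real q \<ge> max 1 (2 * K)) sequentially"
    using filterlim_real_sequentially unfolding filterlim_at_top by (rule spec)
  then show ?thesis
  proof (rule eventually_mono)
    fix q
    assume q: "real q \<ge> max 1 (2 * K)"
    have "(real q + 1) * K \<le> (2 * real q) * K"
      using q \<open>K > 0\<close> by (intro mult_right_mono) auto
    also have "\<dots> \<le> real q * real q"
      using q by (simp add: mult.assoc mult_left_mono)
    finally have "(real q + 1) * K \<le> real q * real q" .
    have "a * (real q + 1) powr e < (real q + 1) powr e * (a + 1)"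
      by (simp add: algebra_simps)
    also have "\<dots> = ((real q + 1) * K) powr e"
      using \<open>K > 0\<close> \<open>a > 0\<close> \<open>e > 0\<close> by (simp add: K_def powr_mult powr_powr)
    also have "\<dots> \<le> (real q * real q) powr e"
      using \<open>(real q + 1) * K \<le> real q * real q\<close> \<open>K > 0\<close> \<open>e > 0\<close>
      by (intro powr_mono2) auto
    finally show "a * (real q + 1) powr e < (real q * real q) powr e" .
  qed
qed

lemma not_cond_dc_if_frequently_exp_square:
  assumes pos: "\<And>p. M p > 0" and big: "\<And>N. \<exists>q\<ge>N. exp (real q ^ 2) \<le> quot_seq M q"
  shows "\<not> cond_dc M"
proof
  assume "cond_dc M"
  then obtain C H where "C > 0" "H > 1" and bound: "\<And>p. quot_seq M p \<le> C * H ^ (p + 1)"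
    unfolding cond_dc_iff_quot_seq[OF pos] by blast
  obtain N where N: "\<And>p. p \<ge> N \<Longrightarrow> C * H ^ (p + 1) < exp (real p ^ 2)"
    using eventually_geometric_lt_exp_square[OF \<open>C > 0\<close> \<open>H > 1\<close>]
    unfolding eventually_sequentially by blast
  obtain q where "q \<ge> N" "exp (real q ^ 2) \<le> quot_seq M q"
    using big by blast
  with N[of q] bound[of q] show False by simp
qed

lemma mono_imp_almost_increasing: "mono c \<Longrightarrow> almost_increasing c"
  unfolding almost_increasing_def by (intro exI[of _ 1]) (auto simp: monoD)

lemma gamma_index_eqI:
  assumes "\<beta> \<ge> 0"
    and "\<And>\<mu>. 0 < \<mu> \<Longrightarrow> \<mu> \<le> \<beta> \<Longrightarrow>
           almost_increasing (\<lambda>p. quot_seq M p / real (p + 1) powr \<mu>)"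
    and "\<And>\<mu>. \<beta> < \<mu> \<Longrightarrow> \<not> almost_increasing (\<lambda>p. quot_seq M p / real (p + 1) powr \<mu>)"
  shows "gamma_index M = ereal \<beta>"
  unfolding gamma_index_def
proof (rule Sup_eqI)
  fix y
  assume "y \<in> insert 0 (ereal ` {\<mu>. \<mu> > 0 \<and>
            almost_increasing (\<lambda>p. quot_seq M p / real (p + 1) powr \<mu>)})"
  then show "y \<le> ereal \<beta>" using assms(1,3) by (auto simp: not_less[symmetric])
next
  fix y
  assume upper: "\<And>z. z \<in> insert 0 (ereal ` {\<mu>. \<mu> > 0 \<and>
            almost_increasing (\<lambda>p. quot_seq M p / real (p + 1) powr \<mu>)}) \<Longrightarrow> z \<le> y"
  show "ereal \<beta> \<le> y"
  proof (cases "\<beta> = 0")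
    case True
    then show ?thesis using upper[of 0] by (simp add: zero_ereal_def)
  next
    case False
    then show ?thesis using upper[of "ereal \<beta>"] assms(1,2) by auto
  qed
qed

definition tower_quot :: "real \<Rightarrow> nat \<Rightarrow> real" where
  "tower_quot \<beta> p = (real p + 1) powr \<beta> * exp (real (tower_floor p) ^ 2)"

lemma tower_quot_pos: "tower_quot \<beta> p > 0"
  by (simp add: tower_quot_def)

lemma tower_quot_div_powr: "tower_quot \<beta> p / real (p + 1) powr \<mu> = tower_quot (\<beta> - \<mu>) p"
  by (simp add: tower_quot_def powr_diff add.commute)

lemma mono_tower_quot:
  assumes "\<beta> \<ge> 0"
  shows "mono (tower_quot \<beta>)"
proof (rule monoI)
  fix p q :: nat
  assume "p \<le> q"
  then have "(real p + 1) powr \<beta> \<le> (real q + 1) powr \<beta>"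
    using assms by (intro powr_mono2) auto
  moreover have "tower_floor p \<le> tower_floor q"
    using mono_tower_floor \<open>p \<le> q\<close> by (rule monoD)
  ultimately show "tower_quot \<beta> p \<le> tower_quot \<beta> q"
    unfolding tower_quot_def by (intro mult_mono) (auto simp: power_mono)
qed

lemma exp_tower_floor_le_tower_quot:
  assumes "\<beta> \<ge> 0"
  shows "exp (real (tower_floor p) ^ 2) \<le> tower_quot \<beta> p"
proof -
  have "1 \<le> (real p + 1) powr \<beta>" using assms by (simp add: ge_one_powr_ge_zero)
  then show ?thesis
    unfolding tower_quot_def by (simp add: mult_le_cancel_right1)
qed

lemma tower_quot_tendsto_at_top:
  assumes "\<beta> \<ge> 0"
  shows "filterlim (tower_quot \<beta>) at_top sequentially"
proof (rule filterlim_at_top_mono)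
  show "filterlim (\<lambda>p. exp (real p)) at_top sequentially"
    by (rule filterlim_compose[OF exp_at_top filterlim_real_sequentially])
  have "exp (real p) \<le> tower_quot \<beta> p" for p
  proof -
    have "real p \<le> real (tower_floor p) ^ 2"
      using tower_floor_bounds[of p] by (simp add: power2_eq_square flip: of_nat_mult)
    then have "exp (real p) \<le> exp (real (tower_floor p) ^ 2)" by (rule exp_mono)
    then show ?thesis using exp_tower_floor_le_tower_quot[OF assms, of p] by linarith
  qed
  then show "eventually (\<lambda>p. exp (real p) \<le> tower_quot \<beta> p) sequentially" by simp
qed

lemma square_le_geometric: "(real p + 3) ^ 2 \<le> 9 * 4 ^ (p + 1)"
proof -
  have "real (p + 1) \<le> 2 ^ (p + 1)"
    using less_exp[of "p + 1"] by (metis less_imp_le of_nat_le_iff of_nat_numeral of_nat_power)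
  then have "(real p + 3) ^ 2 \<le> (3 * 2 ^ (p + 1)) ^ 2" by (intro power_mono) auto
  also have "\<dots> = 9 * ((2::real) ^ (p + 1) * 2 ^ (p + 1))" by (simp add: power2_eq_square)
  also have "\<dots> = 9 * 4 ^ (p + 1)" by (simp flip: power_mult_distrib)
  finally show ?thesis .
qed

lemma ln_tower_quot_le:
  assumes "\<beta> \<ge> 0"
  shows "ln (tower_quot \<beta> p) \<le> (\<beta> + 1) * (real p + 2) ^ 2"
proof -
  have "ln (real p + 1) \<le> real p + 2"
    using ln_le_minus_one[of "real p + 1"] by simp
  also have "\<dots> \<le> (real p + 2) ^ 2"
    by (rule self_le_power) auto
  finally have "ln (real p + 1) \<le> (real p + 2) ^ 2" .
  moreover have "real (tower_floor p) ^ 2 \<le> (real p + 2) ^ 2"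
    using tower_floor_bounds[of p] by (intro power_mono) auto
  ultimately have "\<beta> * ln (real p + 1) + real (tower_floor p) ^ 2 \<le> \<beta> * (real p + 2) ^ 2 + (real p + 2) ^ 2"
    using assms by (intro add_mono mult_left_mono) auto
  then show ?thesis by (simp add: tower_quot_def ln_mult ln_powr algebra_simps)
qed

lemma cond_sm_tower:
  assumes "\<beta> \<ge> 0"
  shows "cond_sm (seq_of_quotients (tower_quot \<beta>))"
proof -
  have "ln (tower_quot \<beta> (p + 1) / tower_quot \<beta> p) \<le> ((\<beta> + 1) * 9) * 4 ^ (p + 1)" for p
  proof -
    have "1 \<le> exp (real (tower_floor p) ^ 2)" by simp
    then have "1 \<le> tower_quot \<beta> p"
      using exp_tower_floor_le_tower_quot[OF assms, of p] by linarith
    then have "ln (tower_quot \<beta> (p + 1) / tower_quot \<beta> p) \<le> ln (tower_quot \<beta> (p + 1))"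
      using tower_quot_pos[of \<beta> "p + 1"] by (simp add: ln_div)
    also have "\<dots> \<le> (\<beta> + 1) * (real p + 3) ^ 2"
      using ln_tower_quot_le[OF assms, of "p + 1"] by (simp add: algebra_simps)
    also have "\<dots> \<le> (\<beta> + 1) * (9 * 4 ^ (p + 1))"
      using square_le_geometric[of p] assms by (intro mult_left_mono) auto
    finally show ?thesis by (simp only: mult.assoc)
  qed
  then show ?thesis
    unfolding cond_sm_def quot_seq_of_quotients[OF tower_quot_pos]
    using assms by (intro exI[of _ "(\<beta> + 1) * 9"] exI[of _ 4] conjI allI) auto
qed

lemma not_cond_dc_tower:
  assumes "\<beta> \<ge> 0"
  shows "\<not> cond_dc (seq_of_quotients (tower_quot \<beta>))"
proof (rule not_cond_dc_if_frequently_exp_square)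
  show "seq_of_quotients (tower_quot \<beta>) p > 0" for p
    using tower_quot_pos by (rule seq_of_quotients_pos)
  fix N
  obtain q where "q \<ge> N" "tower_floor q = q"
    using tower_floor_fixed_points by blast
  then show "\<exists>q\<ge>N. exp (real q ^ 2) \<le> quot_seq (seq_of_quotients (tower_quot \<beta>)) q"
    using exp_tower_floor_le_tower_quot[OF assms, of q]
    by (auto simp: quot_seq_of_quotients[OF tower_quot_pos])
qed

lemma tower_quot_not_almost_increasing:
  assumes "\<alpha> < 0"
  shows "\<not> almost_increasing (tower_quot \<alpha>)"
proof
  assume "almost_increasing (tower_quot \<alpha>)"
  then obtain a where "a > 0" and le: "\<And>p q. p \<le> q \<Longrightarrow> tower_quot \<alpha> p \<le> a * tower_quot \<alpha> q"
    unfolding almost_increasing_def by blast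
  obtain N where N: "\<And>q. q \<ge> N \<Longrightarrow> a * (real q + 1) powr (- \<alpha>) < (real q * real q) powr (- \<alpha>)"
    using eventually_powr_succ_lt_powr_square[of a "- \<alpha>"] \<open>a > 0\<close> \<open>\<alpha> < 0\<close>
    unfolding eventually_sequentially by auto
  obtain q where "q \<ge> N" and fixed: "tower_floor q = q"
    using tower_floor_fixed_points by blast
  have "2 \<le> q" using tower_floor_bounds[of q] fixed by simp
  \<comment> \<open>compare the two ends \<open>q\<close> and \<open>r = q\<^sup>2 - 1\<close> of the plateau of \<open>tower_floor\<close> starting at \<open>q\<close>\<close>
  define r where "r = q * q - 1"
  have "2 * q \<le> q * q" using \<open>2 \<le> q\<close> by simp
  then have "q \<le> r" "Suc r = q * q" using \<open>2 \<le> q\<close> unfolding r_def by linarith+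
  then have "tower_floor r = q"
    using tower_floor_const[of q r] fixed by simp
  have "real r + 1 = real q * real q"
    using arg_cong[OF \<open>Suc r = q * q\<close>, of real] by simp
  have "(real q + 1) powr \<alpha> * exp (real q ^ 2) \<le> a * ((real q * real q) powr \<alpha> * exp (real q ^ 2))"
    using le[OF \<open>q \<le> r\<close>] fixed \<open>tower_floor r = q\<close> \<open>real r + 1 = real q * real q\<close>
    by (simp add: tower_quot_def)
  then have "(real q + 1) powr \<alpha> \<le> a * (real q * real q) powr \<alpha>"
    by (simp add: mult.assoc[symmetric])
  moreover have "x powr \<alpha> = inverse (x powr (- \<alpha>))" if "x > 0" for x :: real
    using that by (simp add: powr_minus)
  ultimately have "inverse ((real q + 1) powr (- \<alpha>)) \<le> a * inverse ((real q * real q) powr (- \<alpha>))"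
    using \<open>2 \<le> q\<close> by simp
  then have "(real q * real q) powr (- \<alpha>) \<le> a * (real q + 1) powr (- \<alpha>)"
    using \<open>2 \<le> q\<close> by (simp add: field_simps)
  with N[OF \<open>q \<ge> N\<close>] show False by simp
qed

lemma gamma_index_tower:
  assumes "\<beta> \<ge> 0"
  shows "gamma_index (seq_of_quotients (tower_quot \<beta>)) = ereal \<beta>"
  using assms
proof (rule gamma_index_eqI)
  have quot: "quot_seq (seq_of_quotients (tower_quot \<beta>)) p / real (p + 1) powr \<mu>
                = tower_quot (\<beta> - \<mu>) p" for p \<mu>
    unfolding quot_seq_of_quotients[OF tower_quot_pos] by (rule tower_quot_div_powr)
  show "almost_increasing (\<lambda>p. quot_seq (seq_of_quotients (tower_quot \<beta>)) p / real (p + 1) powr \<mu>)"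
    if "\<mu> \<le> \<beta>" for \<mu>
    unfolding quot using that by (intro mono_imp_almost_increasing mono_tower_quot) simp
  show "\<not> almost_increasing (\<lambda>p. quot_seq (seq_of_quotients (tower_quot \<beta>)) p / real (p + 1) powr \<mu>)"
    if "\<beta> < \<mu>" for \<mu>
    unfolding quot using that by (intro tower_quot_not_almost_increasing) simp
qed

theorem corollary4p12:
  fixes \<beta> :: real
  assumes "\<beta> \<ge> 0"
  shows "\<exists>M. weight_sequence M \<and> cond_sm M \<and> \<not> cond_dc M \<and> \<not> cond_mg M
             \<and> gamma_index M = ereal \<beta>"
proof (intro exI[of _ "seq_of_quotients (tower_quot \<beta>)"] conjI)
  show "weight_sequence (seq_of_quotients (tower_quot \<beta>))"
    using tower_quot_pos mono_tower_quot[OF assms] tower_quot_tendsto_at_top[OF assms]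
    by (rule weight_sequence_of_quotients)
  show "cond_sm (seq_of_quotients (tower_quot \<beta>))"
    using assms by (rule cond_sm_tower)
  show not_dc: "\<not> cond_dc (seq_of_quotients (tower_quot \<beta>))"
    using assms by (rule not_cond_dc_tower)
  have "seq_of_quotients (tower_quot \<beta>) 1 > 0"
    using tower_quot_pos by (rule seq_of_quotients_pos)
  then show "\<not> cond_mg (seq_of_quotients (tower_quot \<beta>))"
    using not_dc cond_mg_imp_cond_dc by blast
  show "gamma_index (seq_of_quotients (tower_quot \<beta>)) = ereal \<beta>"
    using assms by (rule gamma_index_tower)
qed

end
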